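(* Let $p$ be an odd prime and $\alpha$ an integer with $1\le\alpha<p$. Let $a,b,c$ be non-zero integers with $\gcd(a,b,c)=1$ satisfying $a^p+2^\alpha b^p+c^p=0$ and normalized so that $a\equiv -1 \pmod 4$. Put $A=a^p$, $B=2^\alpha b^p$, and let $E$ be the elliptic curve over $\mathbb{Q}$ given by $y^2=x(x-A)(x+B)$, with conductor $N_E$. Then $N_E$ is a power of $2$ if and only if $(a,b,c)=(-1,1,-1)$.
   Context: Since $\gcd(a,b,c)=1$, $a$ and $c$ are odd, so the normalization $a\equiv-1\pmod 4$ can always be achieved by replacing $(a,b,c)$ by $(-a,-b,-c)$. $N_E$ denotes the (arithmetic) conductor of the elliptic curve $E$ over $\mathbb{Q}$. *)

theory Defs
  imports Complex_Main "HOL-Computational_Algebra.Primes"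
begin

text \<open>Elliptic curves over Q in general Weierstrass form
  y^2 + a1 x y + a3 y = x^3 + a2 x^2 + a4 x + a6,
  represented by the coefficient tuple (a1, a2, a3, a4, a6).\<close>

type_synonym weier = "rat \<times> rat \<times> rat \<times> rat \<times> rat"

definition disc :: "weier \<Rightarrow> rat" where
  "disc E = (case E of (a1, a2, a3, a4, a6) \<Rightarrow>
     let b2 = a1^2 + 4*a2; b4 = 2*a4 + a1*a3; b6 = a3^2 + 4*a6;
         b8 = a1^2*a6 + 4*a2*a6 - a1*a3*a4 + a2*a3^2 - a4^2
     in - (b2^2*b8) - 8*b4^3 - 27*b6^2 + 9*b2*b4*b6)"

text \<open>Admissible change of variables x = u^2 x' + r, y = u^3 y' + s u^2 x' + t
  (Silverman, Table 3.1): coefficients of the transformed model.\<close>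

definition change_vars :: "rat \<Rightarrow> rat \<Rightarrow> rat \<Rightarrow> rat \<Rightarrow> weier \<Rightarrow> weier" where
  "change_vars u r s t E = (case E of (a1, a2, a3, a4, a6) \<Rightarrow>
     ((a1 + 2*s) / u,
      (a2 - s*a1 + 3*r - s^2) / u^2,
      (a3 + r*a1 + 2*t) / u^3,
      (a4 - s*a3 + 2*r*a2 - (t + r*s)*a1 + 3*r^2 - 2*s*t) / u^4,
      (a6 + r*a4 + r^2*a2 + r^3 - t*a3 - t^2 - r*t*a1) / u^6))"

definition int_at :: "int \<Rightarrow> rat \<Rightarrow> bool" where
  "int_at l q \<longleftrightarrow> (\<exists>m n. n \<noteq> 0 \<and> \<not> l dvd n \<and> q = of_int m / of_int n)"

definition unit_at :: "int \<Rightarrow> rat \<Rightarrow> bool" where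
  "unit_at l q \<longleftrightarrow> q \<noteq> 0 \<and> int_at l q \<and> int_at l (1 / q)"

definition integral_model_at :: "int \<Rightarrow> weier \<Rightarrow> bool" where
  "integral_model_at l E = (case E of (a1, a2, a3, a4, a6) \<Rightarrow>
     int_at l a1 \<and> int_at l a2 \<and> int_at l a3 \<and> int_at l a4 \<and> int_at l a6)"

definition good_reduction :: "weier \<Rightarrow> int \<Rightarrow> bool" where
  "good_reduction E l \<longleftrightarrow>
     (\<exists>u r s t. u \<noteq> 0 \<and> integral_model_at l (change_vars u r s t E)
                \<and> unit_at l (disc (change_vars u r s t E)))"

text \<open>The primes dividing the conductor N_E are exactly the primes of bad reduction;
  hence N_E is a power of 2 iff E has good reduction at every odd prime.\<close>
definition conductor_primes :: "weier \<Rightarrow> int set" where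
  "conductor_primes E = {l. prime l \<and> l > 0 \<and> \<not> good_reduction E l}"

definition conductor_is_power_of_2 :: "weier \<Rightarrow> bool" where
  "conductor_is_power_of_2 E \<longleftrightarrow> conductor_primes E \<subseteq> {2}"

text \<open>The Frey-type curve y^2 = x (x - A) (x + B) = x^3 + (B - A) x^2 - A B x.\<close>
definition frey_curve :: "rat \<Rightarrow> rat \<Rightarrow> weier" where
  "frey_curve A B = (0, B - A, 0, - A * B, 0)"

end

theory Submission
  imports Defs
begin

text \<open>If an odd prime \<open>l\<close> divides \<open>a c\<close>, then it divides \<open>A (A + B) = -(a c)\<^sup>p\<close> but,
  by coprimality, not \<open>B\<close>. Since \<open>c\<^sub>4 = 16 (A\<^sup>2 + A B + B\<^sup>2)\<close> and
  \<open>\<Delta> = 16 A\<^sup>2 B\<^sup>2 (A + B)\<^sup>2\<close>, the \<open>j\<close>-invariant \<open>c\<^sub>4\<^sup>3 / \<Delta>\<close> is then not \<open>l\<close>-integral. As the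
  \<open>j\<close>-invariant does not depend on the model and is \<open>l\<close>-integral on an \<open>l\<close>-integral model with
  unit discriminant, \<open>E\<close> has bad reduction at \<open>l\<close>. Hence good reduction away from 2 forces
  \<open>|a| = |c| = 1\<close>, and the normalization and the equation leave only \<open>(-1, 1, -1)\<close>.
  Conversely \<open>(-1, 1, -1)\<close> gives \<open>y\<^sup>2 = x\<^sup>3 + 3x\<^sup>2 + 2x\<close>, whose discriminant is \<open>64\<close>.\<close>

definition c4 :: "weier \<Rightarrow> rat" where
  "c4 E = (case E of (a1, a2, a3, a4, a6) \<Rightarrow> (a1^2 + 4*a2)^2 - 24*(2*a4 + a1*a3))"

definition j_invariant :: "weier \<Rightarrow> rat" where
  "j_invariant E = c4 E ^ 3 / disc E"

definition weier_scale :: "rat \<Rightarrow> weier \<Rightarrow> weier" where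
  "weier_scale u E = (case E of (a1, a2, a3, a4, a6) \<Rightarrow> (a1/u, a2/u^2, a3/u^3, a4/u^4, a6/u^6))"

lemma change_vars_eq_scale_translate:
  "change_vars u r s t E = weier_scale u (change_vars 1 r s t E)"
  by (cases E) (simp add: change_vars_def weier_scale_def)

lemma change_vars_identity: "change_vars 1 0 0 0 E = E"
  by (cases E) (simp add: change_vars_def)

lemma disc_change_vars_translate: "disc (change_vars 1 r s t E) = disc E"
  by (induct E rule: prod_induct5) (simp add: disc_def change_vars_def Let_def; algebra)

lemma c4_change_vars_translate: "c4 (change_vars 1 r s t E) = c4 E"
  by (induct E rule: prod_induct5) (simp add: c4_def change_vars_def; algebra)

lemma disc_weier_scale:
  assumes "u \<noteq> 0" shows "disc (weier_scale u E) = disc E / u^12"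
proof (cases E)
  case (fields a1 a2 a3 a4 a6)
  have "disc (u*x1, u^2*x2, u^3*x3, u^4*x4, u^6*x6) = u^12 * disc (x1, x2, x3, x4, x6)"
    for x1 x2 x3 x4 x6
    unfolding disc_def by (simp add: Let_def) algebra
  from this[of "a1/u" "a2/u^2" "a3/u^3" "a4/u^4" "a6/u^6"] show ?thesis
    using assms fields by (simp add: weier_scale_def field_simps)
qed

lemma c4_weier_scale:
  assumes "u \<noteq> 0" shows "c4 (weier_scale u E) = c4 E / u^4"
proof (cases E)
  case (fields a1 a2 a3 a4 a6)
  have "c4 (u*x1, u^2*x2, u^3*x3, u^4*x4, u^6*x6) = u^4 * c4 (x1, x2, x3, x4, x6)"
    for x1 x2 x3 x4 x6
    unfolding c4_def by simp algebra
  from this[of "a1/u" "a2/u^2" "a3/u^3" "a4/u^4" "a6/u^6"] show ?thesis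
    using assms fields by (simp add: weier_scale_def field_simps)
qed

lemma j_invariant_change_vars:
  assumes "u \<noteq> 0" shows "j_invariant (change_vars u r s t E) = j_invariant E"
  using assms
  by (simp add: j_invariant_def change_vars_eq_scale_translate[of u] disc_weier_scale c4_weier_scale
      disc_change_vars_translate c4_change_vars_translate power_divide flip: power_mult)

lemma int_at_of_int:
  assumes "prime l" shows "int_at l (of_int m)"
  unfolding int_at_def
proof (intro exI conjI)
  show "\<not> l dvd 1" using assms not_prime_unit by blast
qed simp_all

lemma int_at_add:
  assumes "prime l" "int_at l x" "int_at l y" shows "int_at l (x + y)"
proof -
  from assms(2,3) obtain m n m' n' where "n \<noteq> 0" "\<not> l dvd n" "x = of_int m / of_int n"
    and "n' \<noteq> 0" "\<not> l dvd n'" "y = of_int m' / of_int n'"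
    unfolding int_at_def by blast
  then have "x + y = of_int (m*n' + m'*n) / of_int (n*n')" "n*n' \<noteq> 0" "\<not> l dvd n*n'"
    by (simp_all add: add_frac_eq prime_dvd_mult_iff[OF assms(1)])
  then show ?thesis unfolding int_at_def by blast
qed

lemma int_at_mult:
  assumes "prime l" "int_at l x" "int_at l y" shows "int_at l (x * y)"
proof -
  from assms(2,3) obtain m n m' n' where "n \<noteq> 0" "\<not> l dvd n" "x = of_int m / of_int n"
    and "n' \<noteq> 0" "\<not> l dvd n'" "y = of_int m' / of_int n'"
    unfolding int_at_def by blast
  then have "x * y = of_int (m*m') / of_int (n*n')" "n*n' \<noteq> 0" "\<not> l dvd n*n'"
    by (simp_all add: prime_dvd_mult_iff[OF assms(1)])
  then show ?thesis unfolding int_at_def by blast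
qed

lemma int_at_minus: "prime l \<Longrightarrow> int_at l x \<Longrightarrow> int_at l (- x)"
  using int_at_mult[of l "of_int (-1)" x] int_at_of_int[of l "-1"] by simp

lemma int_at_power: "prime l \<Longrightarrow> int_at l x \<Longrightarrow> int_at l (x ^ k)"
  by (induction k) (simp_all add: int_at_mult int_at_of_int[of l 1, simplified])

lemma not_int_at_divide:
  assumes "prime l" "n \<noteq> 0" "l dvd n" "\<not> l dvd m"
  shows "\<not> int_at l (of_int m / of_int n)"
proof
  assume "int_at l (of_int m / of_int n)"
  then obtain m' n' where "n' \<noteq> 0" "\<not> l dvd n'" "(of_int m / of_int n :: rat) = of_int m' / of_int n'"
    unfolding int_at_def by blast
  then have "m * n' = m' * n"
    using assms(2) by (simp add: divide_eq_eq eq_divide_eq flip: of_int_mult of_int_eq_iff)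
  then have "l dvd m * n'" using assms(3) by simp
  then show False using assms \<open>\<not> l dvd n'\<close> by (simp add: prime_dvd_mult_iff)
qed

lemma unit_at_of_int:
  assumes "prime l" "\<not> l dvd n" shows "unit_at l (of_int n)"
proof -
  have "n \<noteq> 0" using assms(2) by auto
  moreover have "int_at l (of_int 1 / of_int n)"
    unfolding int_at_def
  proof (intro exI conjI)
    show "n \<noteq> 0" "\<not> l dvd n" by fact+
  qed (rule refl)
  ultimately show ?thesis by (simp add: unit_at_def int_at_of_int[OF assms(1)])
qed

lemma int_at_c4:
  assumes "prime l" "integral_model_at l E" shows "int_at l (c4 E)"
proof (cases E)
  case (fields a1 a2 a3 a4 a6)
  have "c4 E = (a1^2 + of_int 4*a2)^2 + - (of_int 24*(of_int 2*a4 + a1*a3))"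
    using fields by (simp add: c4_def)
  also have "int_at l \<dots>"
    using assms fields
    by (intro int_at_add int_at_mult int_at_power int_at_minus int_at_of_int)
      (simp_all add: integral_model_at_def)
  finally show ?thesis .
qed

lemma int_at_j_invariant_if_good_reduction:
  assumes "prime l" "good_reduction E l" shows "int_at l (j_invariant E)"
proof -
  obtain u r s t where "u \<noteq> 0" and integral: "integral_model_at l (change_vars u r s t E)"
    and unit: "unit_at l (disc (change_vars u r s t E))"
    using assms(2) unfolding good_reduction_def by blast
  let ?E = "change_vars u r s t E"
  have "int_at l (c4 ?E ^ 3 * (1 / disc ?E))"
    using unit unfolding unit_at_def
    by (intro int_at_mult[OF assms(1)] int_at_power[OF assms(1)] int_at_c4[OF assms(1) integral]) auto
  then have "int_at l (j_invariant ?E)" by (simp add: j_invariant_def)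
  then show ?thesis using j_invariant_change_vars[OF \<open>u \<noteq> 0\<close>] by simp
qed

lemma good_reduction_if_unit_disc:
  "integral_model_at l E \<Longrightarrow> unit_at l (disc E) \<Longrightarrow> good_reduction E l"
  unfolding good_reduction_def by (intro exI[of _ 1] exI[of _ 0]) (simp add: change_vars_identity)

lemma prime_dvd_power_two_imp_eq: "prime (l::int) \<Longrightarrow> l dvd 2 ^ k \<Longrightarrow> l = 2"
  by (metis prime_dvd_power primes_dvd_imp_eq two_is_prime)

lemma c4_frey_curve: "c4 (frey_curve (of_int A) (of_int B)) = of_int (16 * (A^2 + A*B + B^2))"
  by (simp add: c4_def frey_curve_def) algebra

lemma disc_frey_curve: "disc (frey_curve (of_int A) (of_int B)) = of_int (16 * A^2 * B^2 * (A + B)^2)"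
  by (simp add: disc_def frey_curve_def Let_def) algebra

lemma frey_curve_not_good_reduction:
  fixes A B l :: int
  assumes l: "prime l" "l \<noteq> 2" and nonzero: "A \<noteq> 0" "B \<noteq> 0" "A + B \<noteq> 0"
    and "l dvd A * (A + B)" and "\<not> l dvd B"
  shows "\<not> good_reduction (frey_curve (of_int A) (of_int B)) l"
proof
  assume "good_reduction (frey_curve (of_int A) (of_int B)) l"
  then have "int_at l (j_invariant (frey_curve (of_int A) (of_int B)))"
    by (rule int_at_j_invariant_if_good_reduction[OF l(1)])
  then have "int_at l (of_int ((16 * (A^2 + A*B + B^2)) ^ 3) / of_int (16 * A^2 * B^2 * (A + B)^2))"
    by (simp only: j_invariant_def c4_frey_curve disc_frey_curve of_int_power[symmetric])
  moreover have "l dvd 16 * A^2 * B^2 * (A + B)^2"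
  proof -
    have "16 * A^2 * B^2 * (A + B)^2 = (A * (A + B)) * (16 * A * B^2 * (A + B))"
      by (simp add: power2_eq_square)
    then show ?thesis using \<open>l dvd A * (A + B)\<close> by (metis dvd_mult2)
  qed
  moreover have "\<not> l dvd (16 * (A^2 + A*B + B^2)) ^ 3"
  proof
    assume "l dvd (16 * (A^2 + A*B + B^2)) ^ 3"
    moreover have "16 * (A^2 + A*B + B^2) = 2 ^ 4 * (A * (A + B) + B * B)"
      by (simp add: power2_eq_square algebra_simps)
    ultimately have "l dvd 2 ^ 4 * (A * (A + B) + B * B)"
      using l(1) prime_dvd_power by metis
    moreover have "\<not> l dvd 2 ^ 4"
      using prime_dvd_power_two_imp_eq[OF l(1)] l(2) by blast
    ultimately have "l dvd A * (A + B) + B * B"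
      using l(1) prime_dvd_mult_iff by blast
    then have "l dvd B * B" using \<open>l dvd A * (A + B)\<close> by (simp add: dvd_add_right_iff)
    then show False using \<open>\<not> l dvd B\<close> l(1) prime_dvd_mult_iff by blast
  qed
  moreover have "16 * A^2 * B^2 * (A + B)^2 \<noteq> 0" using nonzero by simp
  ultimately show False using not_int_at_divide[OF l(1)] by blast
qed

lemma odd_power_eq_1_imp_eq: "odd p \<Longrightarrow> (b::int) ^ p = 1 \<Longrightarrow> b = 1"
proof -
  assume "odd p" "b ^ p = 1"
  then have "is_unit b" using is_unit_power_iff[of b p] by (metis odd_pos one_dvd less_not_refl)
  then have "b = 1 \<or> b = -1" by auto
  then show "b = 1" using \<open>odd p\<close> \<open>b ^ p = 1\<close> by auto
qed

lemma pow2_mult_odd_power_eq_2: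
  fixes b :: int assumes "odd p" "1 \<le> \<alpha>" "2 ^ \<alpha> * b ^ p = 2"
  shows "\<alpha> = 1 \<and> b = 1"
proof -
  obtain k where "\<alpha> = Suc k" using assms(2) by (cases \<alpha>) auto
  then have "2 ^ k * b ^ p = 1" using assms(3) by simp
  then have "2 ^ k = (1::int)" "b ^ p = 1" by (simp_all add: pos_zmult_eq_1_iff)
  then show ?thesis using \<open>\<alpha> = Suc k\<close> odd_power_eq_1_imp_eq[OF assms(1)] by simp
qed

lemma odd_c_of_solution:
  fixes a b c :: int
  assumes "odd a" "1 \<le> \<alpha>" "0 < p" "a ^ p + 2 ^ \<alpha> * b ^ p + c ^ p = 0"
  shows "odd c"
proof -
  have "c ^ p = - (a ^ p + 2 ^ \<alpha> * b ^ p)" using assms(4) by simp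
  then have "odd (c ^ p)" using assms(1-3) by simp
  then show ?thesis using assms(3) by simp
qed

lemma solution_with_unit_a_c:
  fixes a b c :: int
  assumes "odd p" "1 \<le> \<alpha>" "b \<noteq> 0" "\<bar>a\<bar> = 1" "\<bar>c\<bar> = 1" "a mod 4 = 3"
    and eq: "a ^ p + 2 ^ \<alpha> * b ^ p + c ^ p = 0"
  shows "(a, b, c) = (-1, 1, -1)"
proof -
  have "a = -1" using assms(4,6) by (auto simp: abs_if split: if_splits)
  moreover have "c = -1"
  proof (rule ccontr)
    assume "c \<noteq> -1"
    then have "c = 1" using assms(5) by auto
    then show False using eq \<open>a = -1\<close> \<open>odd p\<close> \<open>b \<noteq> 0\<close> by simp
  qed
  moreover have "b = 1"
    using pow2_mult_odd_power_eq_2[OF assms(1,2)] eq \<open>a = -1\<close> \<open>c = -1\<close> \<open>odd p\<close> by simp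
  ultimately show ?thesis by simp
qed

lemma frey_solution_not_good_reduction:
  fixes a b c l :: int
  assumes l: "prime l" "l \<noteq> 2" "l dvd a * c" and "0 < p"
    and nonzero: "a \<noteq> 0" "b \<noteq> 0" "c \<noteq> 0" and coprime: "gcd a (gcd b c) = 1"
    and eq: "a ^ p + 2 ^ \<alpha> * b ^ p + c ^ p = 0"
  shows "\<not> good_reduction (frey_curve (of_int (a ^ p)) (of_int (2 ^ \<alpha> * b ^ p))) l"
proof (rule frey_curve_not_good_reduction[OF l(1,2)])
  have sum: "a ^ p + 2 ^ \<alpha> * b ^ p = - (c ^ p)" using eq by simp
  then show "a ^ p \<noteq> 0" "2 ^ \<alpha> * b ^ p \<noteq> 0" "a ^ p + 2 ^ \<alpha> * b ^ p \<noteq> 0"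
    using nonzero by simp_all
  have "a ^ p * (a ^ p + 2 ^ \<alpha> * b ^ p) = - ((a * c) ^ p)"
    by (simp add: sum power_mult_distrib)
  moreover have "l dvd (a * c) ^ p" using l(3) \<open>0 < p\<close> by (metis dvd_power dvd_trans)
  ultimately show "l dvd a ^ p * (a ^ p + 2 ^ \<alpha> * b ^ p)" by simp
  show "\<not> l dvd 2 ^ \<alpha> * b ^ p"
  proof
    assume "l dvd 2 ^ \<alpha> * b ^ p"
    then have "l dvd b"
      using l prime_dvd_power_two_imp_eq prime_dvd_mult_iff prime_dvd_power by metis
    have "l dvd a ^ p \<longleftrightarrow> l dvd c ^ p"
      using \<open>l dvd 2 ^ \<alpha> * b ^ p\<close> sum by (metis dvd_add_left_iff dvd_minus_iff)
    then have "l dvd a \<and> l dvd c"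
      using l \<open>0 < p\<close> by (auto simp: prime_dvd_power_iff prime_dvd_mult_iff)
    then have "l dvd gcd a (gcd b c)" using \<open>l dvd b\<close> by simp
    then show False using coprime l(1) not_prime_unit by auto
  qed
qed

lemma good_reduction_frey_curve_minus_1_2:
  assumes "prime l" "l \<noteq> 2" shows "good_reduction (frey_curve (-1) 2) l"
proof (rule good_reduction_if_unit_disc)
  have "\<not> l dvd 2 ^ 6" using assms prime_dvd_power_two_imp_eq by blast
  then show "unit_at l (disc (frey_curve (-1) 2))"
    using unit_at_of_int[OF assms(1), of "2 ^ 6"] by (simp add: disc_def frey_curve_def Let_def)
  show "integral_model_at l (frey_curve (-1) 2)"
    using int_at_of_int[OF assms(1), of 0] int_at_of_int[OF assms(1), of 2]
      int_at_of_int[OF assms(1), of 3]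
    by (simp add: integral_model_at_def frey_curve_def)
qed

theorem mainTheorem3:
  fixes p :: nat and \<alpha> :: nat and a b c :: int
  assumes "prime p" and "odd p"
    and "1 \<le> \<alpha>" and "\<alpha> < p"
    and "a \<noteq> 0" and "b \<noteq> 0" and "c \<noteq> 0"
    and "gcd a (gcd b c) = 1"
    and "a ^ p + 2 ^ \<alpha> * b ^ p + c ^ p = 0"
    and "a mod 4 = 3"
  shows "conductor_is_power_of_2
           (frey_curve (of_int (a ^ p)) (of_int (2 ^ \<alpha> * b ^ p)))
         \<longleftrightarrow> (a, b, c) = (-1, 1, -1)"
proof
  assume power_of_2: "conductor_is_power_of_2 (frey_curve (of_int (a ^ p)) (of_int (2 ^ \<alpha> * b ^ p)))"
  have "0 < p" using \<open>odd p\<close> by presburger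
  have "odd a" using \<open>a mod 4 = 3\<close> by presburger
  then have "odd c" using odd_c_of_solution assms(3,9) \<open>0 < p\<close> by blast
  have "\<not> (\<exists>l. prime l \<and> l dvd a * c)"
  proof
    assume "\<exists>l. prime l \<and> l dvd a * c"
    then obtain l where l: "prime l" "l dvd a * c" by blast
    have "l \<noteq> 2" using l(2) \<open>odd a\<close> \<open>odd c\<close> by auto
    then have "\<not> good_reduction (frey_curve (of_int (a ^ p)) (of_int (2 ^ \<alpha> * b ^ p))) l"
      by (rule frey_solution_not_good_reduction[OF l(1) _ l(2) \<open>0 < p\<close> assms(5-9)])
    then show False
      using power_of_2 l(1) \<open>l \<noteq> 2\<close> prime_gt_0_int
      unfolding conductor_is_power_of_2_def conductor_primes_def by blast
  qed
  then have "is_unit (a * c)" using prime_divisor_exists[of "a * c"] assms(5,7) by auto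
  then have "\<bar>a\<bar> = 1" "\<bar>c\<bar> = 1" unfolding is_unit_mult_iff by simp_all
  then show "(a, b, c) = (-1, 1, -1)"
    using solution_with_unit_a_c[OF \<open>odd p\<close> \<open>1 \<le> \<alpha>\<close> \<open>b \<noteq> 0\<close>] assms(9,10) by blast
next
  assume "(a, b, c) = (-1, 1, -1)"
  moreover from this have "\<alpha> = 1" using pow2_mult_odd_power_eq_2[of p \<alpha> 1] assms(2,3,9) by simp
  ultimately show "conductor_is_power_of_2 (frey_curve (of_int (a ^ p)) (of_int (2 ^ \<alpha> * b ^ p)))"
    using good_reduction_frey_curve_minus_1_2 \<open>odd p\<close>
    unfolding conductor_is_power_of_2_def conductor_primes_def by auto
qed

end
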